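(* Let $J$ and $K$ be subcontinua of the Cantor fan $C=F/{\sim}$ with $v\in K\subseteq J$, and let $r:J\to K$ be a retraction. The following are equivalent: 1. $r$ is simple, i.e. $r(A)\subseteq A$ for every leg $A\in\mathcal L(J)$; 2. there is a retraction $R:F_J\to F_K$ such that $q(R(x))=r(q(x))$ for every $x\in F_J$.
   Context: Let $Y$ be a Cantor set, $F=Y\times[0,1]$, and let $\sim$ be the equivalence relation on $F$ given by $(x,t)\sim(y,s)$ iff $(x,t)=(y,s)$ or $s=t=0$. Let $C=F/{\sim}$ (a Cantor fan), $q:F\to C$ the quotient map, and $v=q(Y\times\{0\})$ the top of $C$. For a subcontinuum $K$ of $C$ put $F_K=q^{-1}(K)$ (the fence of $K$). For a subcontinuum $J$ of $C$ containing $v$ (which is a fan), an end point of $J$ is a point that is an end point of every arc in $J$ containing it; a leg of $J$ is an arc from $v$ to an end point $e\neq v$ of $J$; $\mathcal L(J)$ denotes the set of legs. For $A\in\mathcal L(J)$, $L_A$ denotes the non-degenerate component of $q^{-1}(A)$ (if $A=q(\{y\}\times[0,t])$ then $L_A=\{y\}\times[0,t]$). A retraction from $X$ onto a subspace $Z$ is a continuous map $r:X\to Z$ with $r(z)=z$ for all $z\in Z$. *)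

theory Defs
  imports "HOL-Analysis.Analysis"
begin

definition cantor_set :: "real set" where
  "cantor_set = {x. \<exists>a::nat \<Rightarrow> nat. (\<forall>n. a n \<in> {0, 2}) \<and> x = (\<Sum>n. real (a n) / 3 ^ Suc n)}"

definition fan_F :: "'a::topological_space set \<Rightarrow> ('a \<times> real) set" where
  "fan_F Y = Y \<times> {0..1}"

definition fan_rel :: "('a \<times> real) \<Rightarrow> ('a \<times> real) \<Rightarrow> bool" where
  "fan_rel p p' \<longleftrightarrow> p = p' \<or> (snd p = 0 \<and> snd p' = 0)"

definition fan_q :: "'a::topological_space set \<Rightarrow> ('a \<times> real) \<Rightarrow> ('a \<times> real) set" where
  "fan_q Y p = {p' \<in> fan_F Y. fan_rel p p'}"

definition fan_open :: "'a::topological_space set \<Rightarrow> ('a \<times> real) set set \<Rightarrow> bool" where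
  "fan_open Y U \<longleftrightarrow> U \<subseteq> fan_q Y ` fan_F Y \<and>
     openin (top_of_set (fan_F Y)) {p \<in> fan_F Y. fan_q Y p \<in> U}"

lemma istopology_fan_open: "istopology (fan_open Y)"
proof -
  have 1: "fan_open Y (S \<inter> T)" if a: "fan_open Y S" and b: "fan_open Y T" for S T
  proof -
    have eq: "{p \<in> fan_F Y. fan_q Y p \<in> S \<inter> T} =
        {p \<in> fan_F Y. fan_q Y p \<in> S} \<inter> {p \<in> fan_F Y. fan_q Y p \<in> T}" by auto
    show ?thesis using a b unfolding fan_open_def eq by (auto intro: openin_Int)
  qed
  have 2: "fan_open Y (\<Union>KK)" if a: "\<forall>S\<in>KK. fan_open Y S" for KK
  proof -
    have eq: "{p \<in> fan_F Y. fan_q Y p \<in> \<Union>KK} = (\<Union>S\<in>KK. {p \<in> fan_F Y. fan_q Y p \<in> S})" by auto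
    show ?thesis using a unfolding fan_open_def eq by (auto intro!: openin_Union)
  qed
  show ?thesis unfolding istopology_def using 1 2 by blast
qed

definition fan_C :: "'a::topological_space set \<Rightarrow> ('a \<times> real) set topology" where
  "fan_C Y = topology (fan_open Y)"

definition fan_top :: "'a::topological_space set \<Rightarrow> ('a \<times> real) set" where
  "fan_top Y = Y \<times> {0}"

definition fence :: "'a::topological_space set \<Rightarrow> ('a \<times> real) set set \<Rightarrow> ('a \<times> real) set" where
  "fence Y K = {p \<in> fan_F Y. fan_q Y p \<in> K}"

definition subcontinuum :: "'b topology \<Rightarrow> 'b set \<Rightarrow> bool" where
  "subcontinuum X K \<longleftrightarrow> K \<noteq> {} \<and> compactin X K \<and> connectedin X K"

definition arc_from_to :: "'b topology \<Rightarrow> 'b set \<Rightarrow> 'b \<Rightarrow> 'b \<Rightarrow> bool" where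
  "arc_from_to X A a b \<longleftrightarrow> A \<subseteq> topspace X \<and>
     (\<exists>g. homeomorphic_map (top_of_set {0..1::real}) (subtopology X A) g \<and> g 0 = a \<and> g 1 = b)"

definition is_arc :: "'b topology \<Rightarrow> 'b set \<Rightarrow> bool" where
  "is_arc X A \<longleftrightarrow> (\<exists>a b. arc_from_to X A a b)"

definition arc_endpoint :: "'b topology \<Rightarrow> 'b set \<Rightarrow> 'b \<Rightarrow> bool" where
  "arc_endpoint X A e \<longleftrightarrow> (\<exists>b. arc_from_to X A e b)"

definition end_point :: "'b topology \<Rightarrow> 'b set \<Rightarrow> 'b \<Rightarrow> bool" where
  "end_point X J e \<longleftrightarrow> e \<in> J \<and> (\<forall>A. A \<subseteq> J \<and> is_arc X A \<and> e \<in> A \<longrightarrow> arc_endpoint X A e)"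

definition legs :: "'b topology \<Rightarrow> 'b \<Rightarrow> 'b set \<Rightarrow> 'b set set" where
  "legs X v J = {A. A \<subseteq> J \<and> (\<exists>e. end_point X J e \<and> e \<noteq> v \<and> arc_from_to X A v e)}"

definition retraction_onto :: "'b topology \<Rightarrow> 'b set \<Rightarrow> 'b set \<Rightarrow> ('b \<Rightarrow> 'b) \<Rightarrow> bool" where
  "retraction_onto X S Z r \<longleftrightarrow> Z \<subseteq> S \<and>
     continuous_map (subtopology X S) (subtopology X Z) r \<and> (\<forall>z\<in>Z. r z = z)"

definition simple_retraction :: "'b topology \<Rightarrow> 'b \<Rightarrow> 'b set \<Rightarrow> ('b \<Rightarrow> 'b) \<Rightarrow> bool" where
  "simple_retraction X v J r \<longleftrightarrow> (\<forall>A \<in> legs X v J. r ` A \<subseteq> A)"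

end

theory Submission
  imports Defs
begin

text \<open>
  Since Y is zero-dimensional, a connected subset of C missing the top v lies in a single ray
  q({y} \<times> ]0,1]), and a connected subset of the fence F lies in a single fibre {y} \<times> [0,1].
  Hence the legs of J are exactly the segments q({y} \<times> [0,t]) with t the largest height at
  which the ray over y meets J, and the end point q(y,t) of such a leg lies in no longer segment
  contained in J. If r is simple it maps every ray of J into itself, so
  R(y,s) = (y, height of r(q(y,s))) is a continuous lift of r. Conversely, a lift R maps
  {y} \<times> [0,s] to a connected set through the fixed point (y,0), hence into the fibre over y;
  its image under q is a segment of K \<subseteq> J starting at v, so by the end point property it is
  no longer than the leg, and r maps the leg into itself.
\<close>

section \<open>The Cantor set has empty interior\<close>

definition ternary_sum :: "(nat \<Rightarrow> nat) \<Rightarrow> real" where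
  "ternary_sum a = (\<Sum>n. real (a n) / 3 ^ Suc n)"

lemma sums_two_thirds_powers: "(\<lambda>n. 2 / 3 ^ Suc n :: real) sums 1"
proof -
  have "(\<lambda>n. (2/3) * (1/3::real) ^ n) sums ((2/3) * (1 / (1 - 1/3)))"
    by (intro sums_mult geometric_sums) auto
  moreover have "(\<lambda>n. (2/3) * (1/3::real) ^ n) = (\<lambda>n. 2 / 3 ^ Suc n)"
    by (auto simp: power_divide field_simps)
  ultimately show ?thesis by simp
qed

lemma ternary_term_le:
  assumes "\<forall>n. a n \<in> {0, 2}" shows "real (a n) / 3 ^ Suc n \<le> 2 / 3 ^ Suc n"
  using assms[rule_format, of n] by (auto simp: divide_right_mono)

lemma summable_ternary_sum:
  assumes "\<forall>n. a n \<in> {0, 2}" shows "summable (\<lambda>n. real (a n) / 3 ^ Suc n)"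
  by (rule summable_comparison_test[OF _ sums_summable[OF sums_two_thirds_powers]])
    (use ternary_term_le[OF assms] in auto)

lemma ternary_sum_bounds:
  assumes "\<forall>n. a n \<in> {0, 2}" shows "0 \<le> ternary_sum a" "ternary_sum a \<le> 1"
proof -
  show "0 \<le> ternary_sum a"
    unfolding ternary_sum_def by (rule suminf_nonneg[OF summable_ternary_sum[OF assms]]) auto
  have "ternary_sum a \<le> (\<Sum>n. 2 / 3 ^ Suc n)" unfolding ternary_sum_def
    by (rule suminf_le[OF _ summable_ternary_sum[OF assms] sums_summable[OF sums_two_thirds_powers]])
      (use ternary_term_le[OF assms] in auto)
  then show "ternary_sum a \<le> 1" using sums_unique[OF sums_two_thirds_powers] by simp
qed

lemma ternary_sum_shift:
  assumes "\<forall>n. a n \<in> {0, 2}"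
  shows "3 * ternary_sum a = real (a 0) + ternary_sum (\<lambda>n. a (Suc n))"
proof -
  have "ternary_sum a = real (a 0) / 3 + (\<Sum>n. (real (a (Suc n)) / 3 ^ Suc n) / 3)"
    unfolding ternary_sum_def using suminf_split_head[OF summable_ternary_sum[OF assms]]
    by (simp add: divide_divide_eq_left mult.commute)
  also have "(\<Sum>n. (real (a (Suc n)) / 3 ^ Suc n) / 3) = ternary_sum (\<lambda>n. a (Suc n)) / 3"
    unfolding ternary_sum_def using assms by (intro suminf_divide summable_ternary_sum) auto
  finally show ?thesis by simp
qed

lemma ternary_sum_scaled_avoids_middle:
  assumes "\<forall>n. a n \<in> {0, 2}"
  shows "\<exists>m::int. 3 ^ k * ternary_sum a - m \<in> {0..1/3} \<union> {2/3..1}"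
  using assms
proof (induction k arbitrary: a)
  case 0
  have "a 0 = 0 \<or> a 0 = 2" using "0.prems" by auto
  then have "3 * ternary_sum a \<in> {0..1} \<union> {2..3}"
    using ternary_sum_shift[OF "0.prems"] ternary_sum_bounds[of "\<lambda>n. a (Suc n)"] "0.prems"
    by (elim disjE) auto
  then have "3 ^ 0 * ternary_sum a - real_of_int 0 \<in> {0..1/3} \<union> {2/3..1}" by auto
  then show ?case by blast
next
  case (Suc k)
  obtain m :: int where m: "3 ^ k * ternary_sum (\<lambda>n. a (Suc n)) - m \<in> {0..1/3} \<union> {2/3..1}"
    using Suc.IH[of "\<lambda>n. a (Suc n)"] Suc.prems by auto
  have "3 ^ Suc k * ternary_sum a = 3 ^ k * (3 * ternary_sum a)" by simp
  also have "\<dots> = 3 ^ k * real (a 0) + 3 ^ k * ternary_sum (\<lambda>n. a (Suc n))"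
    by (simp add: ternary_sum_shift[OF Suc.prems] distrib_left)
  finally have "3 ^ Suc k * ternary_sum a - real_of_int (m + 3 ^ k * int (a 0))
      = 3 ^ k * ternary_sum (\<lambda>n. a (Suc n)) - m"
    by simp
  then show ?case using m by metis
qed

lemma interior_cantor_set: "interior cantor_set = {}"
proof (rule ccontr)
  assume "interior cantor_set \<noteq> {}"
  then obtain x e where e: "0 < e" "ball x e \<subseteq> cantor_set"
    by (metis all_not_in_conv open_contains_ball_eq open_interior interior_subset subset_trans)
  obtain k :: nat where k: "2 / e < 3 ^ k"
    using real_arch_pow[of 3 "2 / e"] by auto
  \<comment> \<open>w is the centre of a middle third at scale 3^(-k), and lies within e of x\<close>
  define j where "j = \<lfloor>3 ^ k * x\<rfloor>"
  define w :: real where "w = (j + 3/2) / 3 ^ k"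
  have "3 ^ k * w = j + 3/2" unfolding w_def by simp
  moreover have "j \<le> 3 ^ k * x" "3 ^ k * x < j + 1" unfolding j_def by linarith+
  moreover have "2 < 3 ^ k * e" using k e by (simp add: field_simps)
  ultimately have "\<bar>3 ^ k * (w - x)\<bar> < 3 ^ k * e" by (simp add: algebra_simps abs_if)
  then have "w \<in> ball x e" by (simp add: dist_real_def abs_mult)
  then obtain a where "\<forall>n. a n \<in> {0, 2}" "w = ternary_sum a"
    using e(2) unfolding cantor_set_def ternary_sum_def by blast
  then obtain m :: int where "3 ^ k * w - m \<in> {0..1/3} \<union> {2/3..1}"
    using ternary_sum_scaled_avoids_middle by blast
  moreover have "3 ^ k * w - m = real_of_int (j - m) + 3/2"
    using \<open>3 ^ k * w = j + 3/2\<close> by simp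
  ultimately have "real_of_int (j - m) + 3/2 \<in> {0..1/3} \<union> {2/3..1}" by metis
  moreover have "j - m \<le> -2 \<or> j - m = -1 \<or> j - m \<ge> 0"
    by linarith
  then have "real_of_int (j - m) \<le> -2 \<or> real_of_int (j - m) = -1 \<or> real_of_int (j - m) \<ge> 0"
    by (elim disjE) simp_all
  ultimately show False by auto
qed

section \<open>Zero-dimensional spaces\<close>

definition zero_dimensional_space :: "'a topology \<Rightarrow> bool" where
  "zero_dimensional_space X \<longleftrightarrow>
     (\<forall>U x. openin X U \<and> x \<in> U \<longrightarrow> (\<exists>V. openin X V \<and> closedin X V \<and> x \<in> V \<and> V \<subseteq> U))"

lemma zero_dimensional_space_homeomorphic:
  assumes "X homeomorphic_space X'" "zero_dimensional_space X'"
  shows "zero_dimensional_space X"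
  unfolding zero_dimensional_space_def
proof (intro allI impI, elim conjE)
  fix U x assume U: "openin X U" and x: "x \<in> U"
  obtain f where f: "homeomorphic_map X X' f"
    using assms(1) homeomorphic_space by blast
  have "openin X' (f ` U)" using homeomorphic_map_openness[OF f openin_subset[OF U]] U by blast
  then obtain V where V: "openin X' V" "closedin X' V" "f x \<in> V" "V \<subseteq> f ` U"
    using assms(2) x unfolding zero_dimensional_space_def by blast
  define W where "W = {z \<in> topspace X. f z \<in> V}"
  have fc: "continuous_map X X' f" using homeomorphic_imp_continuous_map[OF f] .
  have "openin X W" "closedin X W"
    unfolding W_def using openin_continuous_map_preimage[OF fc V(1)]
      closedin_continuous_map_preimage[OF fc V(2)] by auto
  moreover have "x \<in> W" using x V(3) openin_subset[OF U] unfolding W_def by auto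
  moreover have "W \<subseteq> U"
  proof
    fix z assume "z \<in> W"
    then obtain u where "u \<in> U" "f z = f u" "z \<in> topspace X" using V(4) unfolding W_def by auto
    then show "z \<in> U"
      using homeomorphic_imp_injective_map[OF f] openin_subset[OF U] by (metis inj_onD subsetD)
  qed
  ultimately show "\<exists>W. openin X W \<and> closedin X W \<and> x \<in> W \<and> W \<subseteq> U" by blast
qed

lemma zero_dimensional_space_real:
  fixes S :: "real set"
  assumes "interior S = {}"
  shows "zero_dimensional_space (top_of_set S)"
  unfolding zero_dimensional_space_def
proof (intro allI impI, elim conjE)
  fix U x assume U: "openin (top_of_set S) U" and x: "x \<in> U"
  have gap: "\<exists>w. a < w \<and> w < b \<and> w \<notin> S" if "a < b" for a b
  proof (rule ccontr)
    assume "\<nexists>w. a < w \<and> w < b \<and> w \<notin> S"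
    then have "{a<..<b} \<subseteq> interior S" by (intro interior_maximal) auto
    then show False using assms that by auto
  qed
  obtain G where G: "open G" "U = S \<inter> G" using U by (meson openin_open)
  then obtain d where d: "d > 0" "ball x d \<subseteq> G" using x by (meson IntD2 openE)
  obtain a where a: "x - d < a" "a < x" "a \<notin> S" using gap[of "x - d" x] d(1) by auto
  obtain b where b: "x < b" "b < x + d" "b \<notin> S" using gap[of x "x + d"] d(1) by auto
  have "openin (top_of_set S) (S \<inter> {a<..<b})" by (intro openin_open_Int) auto
  moreover have "S \<inter> {a<..<b} = S \<inter> {a..b}" using a(3) b(3) by (auto simp: less_le)
  then have "closedin (top_of_set S) (S \<inter> {a<..<b})" by (simp add: closedin_closed_Int)
  moreover have "x \<in> S \<inter> {a<..<b}" using x G(2) a b by auto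
  moreover have "{a<..<b} \<subseteq> ball x d" using a b by (auto simp: dist_real_def)
  then have "S \<inter> {a<..<b} \<subseteq> U" using G(2) d(2) by blast
  ultimately show "\<exists>V. openin (top_of_set S) V \<and> closedin (top_of_set S) V \<and> x \<in> V \<and> V \<subseteq> U"
    by blast
qed

lemma homeomorphic_imp_homeomorphic_space:
  assumes "S homeomorphic T"
  shows "top_of_set S homeomorphic_space top_of_set T"
proof -
  obtain f g where "homeomorphism S T f g" using assms homeomorphic_def by blast
  then have "homeomorphic_maps (top_of_set S) (top_of_set T) f g"
    unfolding homeomorphism_def homeomorphic_maps_def by auto
  then show ?thesis unfolding homeomorphic_space_def by blast
qed

section \<open>The quotient topology of the fan\<close>

lemma mem_fan_F [simp]: "(y, s) \<in> fan_F Y \<longleftrightarrow> y \<in> Y \<and> 0 \<le> s \<and> s \<le> 1"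
  by (auto simp: fan_F_def)

lemma fan_q_zero: "y \<in> Y \<Longrightarrow> fan_q Y (y, 0) = fan_top Y"
  by (auto simp: fan_q_def fan_top_def fan_rel_def fan_F_def)

lemma fan_q_eq_iff:
  assumes "p \<in> fan_F Y" "p' \<in> fan_F Y"
  shows "fan_q Y p = fan_q Y p' \<longleftrightarrow> fan_rel p p'"
proof
  assume "fan_q Y p = fan_q Y p'"
  moreover have "p \<in> fan_q Y p" using assms(1) by (simp add: fan_q_def fan_rel_def)
  ultimately show "fan_rel p p'" by (auto simp: fan_q_def fan_rel_def)
qed (auto simp: fan_q_def fan_rel_def)

lemma fan_q_eq_imp_eq:
  "\<lbrakk>p \<in> fan_F Y; p' \<in> fan_F Y; snd p \<noteq> 0; fan_q Y p = fan_q Y p'\<rbrakk> \<Longrightarrow> p = p'"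
  using fan_q_eq_iff[of p Y p'] by (auto simp: fan_rel_def)

lemma fan_q_eq_top_iff:
  assumes "p \<in> fan_F Y" shows "fan_q Y p = fan_top Y \<longleftrightarrow> snd p = 0"
proof (cases "snd p = 0")
  case False
  then have "p \<in> fan_q Y p" "p \<notin> fan_top Y"
    using assms by (auto simp: fan_q_def fan_rel_def fan_top_def)
  then show ?thesis using False by auto
qed (use assms fan_q_zero[of "fst p" Y] in \<open>cases p, auto\<close>)

lemma openin_fan_C: "openin (fan_C Y) U \<longleftrightarrow> fan_open Y U"
  by (simp add: fan_C_def istopology_fan_open)

lemma topspace_fan_C: "topspace (fan_C Y) = fan_q Y ` fan_F Y"
proof -
  have "{p \<in> fan_F Y. fan_q Y p \<in> fan_q Y ` fan_F Y} = fan_F Y" by auto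
  then have "fan_open Y (fan_q Y ` fan_F Y)" unfolding fan_open_def by simp
  moreover have "\<And>U. fan_open Y U \<Longrightarrow> U \<subseteq> fan_q Y ` fan_F Y" unfolding fan_open_def by auto
  ultimately show ?thesis unfolding topspace_def openin_fan_C by blast
qed

lemma quotient_map_fan_q: "quotient_map (top_of_set (fan_F Y)) (fan_C Y) (fan_q Y)"
  unfolding quotient_map_def topspace_fan_C openin_fan_C fan_open_def by auto

lemma continuous_map_fan_q: "continuous_map (top_of_set (fan_F Y)) (fan_C Y) (fan_q Y)"
  by (rule quotient_imp_continuous_map[OF quotient_map_fan_q])

lemma openin_fan_C_saturated_image:
  assumes "openin (top_of_set (fan_F Y)) P"
    and "\<And>p p'. p \<in> P \<Longrightarrow> p' \<in> fan_F Y \<Longrightarrow> fan_rel p p' \<Longrightarrow> p' \<in> P"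
  shows "openin (fan_C Y) (fan_q Y ` P)"
proof -
  have PF: "P \<subseteq> fan_F Y" using openin_subset[OF assms(1)] by simp
  have "{p \<in> fan_F Y. fan_q Y p \<in> fan_q Y ` P} = P"
  proof safe
    fix p p' assume "p \<in> fan_F Y" "p' \<in> P" "fan_q Y p = fan_q Y p'"
    then show "p \<in> P" using assms(2)[of p' p] fan_q_eq_iff[of p' Y p] PF by auto
  qed (use PF in auto)
  then show ?thesis unfolding openin_fan_C fan_open_def using assms(1) PF by auto
qed

text \<open>A point of the fan is an equivalence class, all of whose members have the same height.\<close>
definition fan_height :: "('a \<times> real) set \<Rightarrow> real" where
  "fan_height c = snd (SOME p. p \<in> c)"

lemma fan_height_fan_q [simp]: "p \<in> fan_F Y \<Longrightarrow> fan_height (fan_q Y p) = snd p"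
proof -
  assume p: "p \<in> fan_F Y"
  then have "p \<in> fan_q Y p" by (simp add: fan_q_def fan_rel_def)
  then have "(SOME p'. p' \<in> fan_q Y p) \<in> fan_q Y p" by (rule someI)
  then show ?thesis unfolding fan_height_def by (auto simp: fan_q_def fan_rel_def)
qed

lemma fan_height_top: "y \<in> Y \<Longrightarrow> fan_height (fan_top Y) = 0"
  using fan_height_fan_q[of "(y, 0)" Y] by (simp add: fan_q_zero)

lemma continuous_map_fan_height: "continuous_map (fan_C Y) euclideanreal fan_height"
proof (rule continuous_compose_quotient_map[OF quotient_map_fan_q])
  have "continuous_on (fan_F Y) (fan_height \<circ> fan_q Y)"
    by (rule continuous_on_cong[THEN iffD1, OF refl _ continuous_on_snd[OF continuous_on_id]]) auto
  then show "continuous_map (top_of_set (fan_F Y)) euclideanreal (fan_height \<circ> fan_q Y)" by simp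
qed

lemma fan_C_point_cases:
  assumes "c \<in> topspace (fan_C Y)"
  obtains y s where "(y, s) \<in> fan_F Y" "c = fan_q Y (y, s)"
  using assms unfolding topspace_fan_C by auto

lemma fan_C_point_off_top:
  assumes "c \<in> topspace (fan_C Y)" "c \<noteq> fan_top Y"
  obtains y s where "(y, s) \<in> fan_F Y" "s > 0" "c = fan_q Y (y, s)"
proof -
  obtain y s where ys: "(y, s) \<in> fan_F Y" "c = fan_q Y (y, s)" using fan_C_point_cases[OF assms(1)] .
  then have "s \<noteq> 0" using fan_q_zero assms(2) by auto
  then show ?thesis using that ys by auto
qed

lemma continuous_map_fan_ray:
  assumes "y \<in> Y" "continuous_on S f" "f ` S \<subseteq> {0..1}"
  shows "continuous_map (top_of_set S) (fan_C Y) (\<lambda>c. fan_q Y (y, f c))"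
proof -
  have "continuous_map (top_of_set S) (top_of_set (fan_F Y)) (\<lambda>c. (y, f c))"
    using assms by (auto simp: image_subset_iff intro!: continuous_on_Pair continuous_on_const)
  from continuous_map_compose[OF this continuous_map_fan_q] show ?thesis by (simp add: o_def)
qed

lemma openin_fan_C_above:
  assumes "openin (top_of_set Y) V" "a \<ge> 0"
  shows "openin (fan_C Y) (fan_q Y ` {p \<in> fan_F Y. fst p \<in> V \<and> snd p > a})"
proof (rule openin_fan_C_saturated_image)
  obtain U where U: "open U" "V = Y \<inter> U" using assms(1) by (meson openin_open)
  have "{p \<in> fan_F Y. fst p \<in> V \<and> snd p > a} = fan_F Y \<inter> (U \<times> {a<..})"
    unfolding U(2) fan_F_def by auto
  then show "openin (top_of_set (fan_F Y)) {p \<in> fan_F Y. fst p \<in> V \<and> snd p > a}"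
    using U(1) by (simp add: openin_open_Int open_Times)
next
  fix p p' assume "p \<in> {p \<in> fan_F Y. fst p \<in> V \<and> a < snd p}" "p' \<in> fan_F Y" "fan_rel p p'"
  then show "p' \<in> {p \<in> fan_F Y. fst p \<in> V \<and> a < snd p}" using assms(2) by (auto simp: fan_rel_def)
qed

lemma openin_fan_C_below:
  assumes "openin (top_of_set Y) W" "s > 0"
  shows "openin (fan_C Y) (fan_q Y ` {p \<in> fan_F Y. fst p \<in> W \<or> snd p < s})"
proof (rule openin_fan_C_saturated_image)
  obtain U where U: "open U" "W = Y \<inter> U" using assms(1) by (meson openin_open)
  have "{p \<in> fan_F Y. fst p \<in> W \<or> snd p < s} = fan_F Y \<inter> ((U \<times> UNIV) \<union> (UNIV \<times> {..<s}))"
    unfolding U(2) fan_F_def by auto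
  then show "openin (top_of_set (fan_F Y)) {p \<in> fan_F Y. fst p \<in> W \<or> snd p < s}"
    using U(1) by (simp add: openin_open_Int open_Un open_Times)
next
  fix p p' assume "p \<in> {p \<in> fan_F Y. fst p \<in> W \<or> snd p < s}" "p' \<in> fan_F Y" "fan_rel p p'"
  then show "p' \<in> {p \<in> fan_F Y. fst p \<in> W \<or> snd p < s}" using assms(2) by (auto simp: fan_rel_def)
qed

lemma fan_C_split_at_height:
  assumes V: "openin (top_of_set Y) V" "closedin (top_of_set Y) V" and s: "s > 0"
  obtains U1 U2 where "openin (fan_C Y) U1" "openin (fan_C Y) U2" "U1 \<inter> U2 = {}"
    "topspace (fan_C Y) - (\<lambda>y. fan_q Y (y, s)) ` V \<subseteq> U1 \<union> U2"
    "\<forall>y\<in>V. \<forall>u\<in>{s<..1}. fan_q Y (y, u) \<in> U1" "\<forall>y\<in>Y. fan_q Y (y, 0) \<in> U2"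
proof -
  have V': "openin (top_of_set Y) (Y - V)" using V(2) by (simp add: closedin_def)
  define U1 where "U1 = fan_q Y ` {p \<in> fan_F Y. fst p \<in> V \<and> snd p > s}"
  define U2 where "U2 = fan_q Y ` {p \<in> fan_F Y. fst p \<in> Y - V \<or> snd p < s}"
  have "openin (fan_C Y) U1" "openin (fan_C Y) U2"
    unfolding U1_def U2_def using openin_fan_C_above[OF V(1)] openin_fan_C_below[OF V'] s by auto
  moreover have "U1 \<inter> U2 = {}"
  proof (rule ccontr)
    assume "U1 \<inter> U2 \<noteq> {}"
    then obtain p p' where "p \<in> fan_F Y" "fst p \<in> V" "snd p > s" "p' \<in> fan_F Y"
      "fst p' \<in> Y - V \<or> snd p' < s" "fan_q Y p = fan_q Y p'"
      unfolding U1_def U2_def by blast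
    then show False using fan_q_eq_imp_eq s by (metis DiffD2 less_asym less_irrefl)
  qed
  moreover have "topspace (fan_C Y) - (\<lambda>y. fan_q Y (y, s)) ` V \<subseteq> U1 \<union> U2"
  proof
    fix c assume c: "c \<in> topspace (fan_C Y) - (\<lambda>y. fan_q Y (y, s)) ` V"
    then obtain y u where yu: "(y, u) \<in> fan_F Y" "c = fan_q Y (y, u)"
      using fan_C_point_cases[of c Y] by blast
    have "\<not> (y \<in> V \<and> u = s)" using c yu by auto
    then consider "y \<in> V" "u > s" | "y \<in> Y - V \<or> u < s" using yu by fastforce
    then show "c \<in> U1 \<union> U2" unfolding U1_def U2_def using yu by cases force+
  qed
  moreover have "\<forall>y\<in>V. \<forall>u\<in>{s<..1}. fan_q Y (y, u) \<in> U1"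
  proof (intro ballI)
    fix y u assume "y \<in> V" "u \<in> {s<..1}"
    moreover have "y \<in> Y" using \<open>y \<in> V\<close> openin_subset[OF V(1)] by auto
    ultimately show "fan_q Y (y, u) \<in> U1" unfolding U1_def using s by (intro imageI) auto
  qed
  moreover have "\<forall>y\<in>Y. fan_q Y (y, 0) \<in> U2" unfolding U2_def using s by (auto intro!: imageI)
  ultimately show ?thesis using that by blast
qed

definition fan_segment :: "'a::topological_space set \<Rightarrow> 'a \<Rightarrow> real \<Rightarrow> ('a \<times> real) set set" where
  "fan_segment Y y t = (\<lambda>s. fan_q Y (y, s)) ` {0..t}"

lemma fan_segment_subset_topspace: "y \<in> Y \<Longrightarrow> t \<le> 1 \<Longrightarrow> fan_segment Y y t \<subseteq> topspace (fan_C Y)"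
  unfolding fan_segment_def topspace_fan_C by auto

lemma fan_segment_memI: "s \<in> {0..t} \<Longrightarrow> fan_q Y (y, s) \<in> fan_segment Y y t"
  unfolding fan_segment_def by auto

lemma fan_segment_memE:
  assumes "x \<in> fan_segment Y y t" "y \<in> Y" "t \<le> 1"
  shows "x = fan_q Y (y, fan_height x)" "0 \<le> fan_height x" "fan_height x \<le> t"
proof -
  obtain s where "s \<in> {0..t}" "x = fan_q Y (y, s)" using assms(1) unfolding fan_segment_def by blast
  moreover have "fan_height x = s" using calculation assms(2,3) by simp
  ultimately show "x = fan_q Y (y, fan_height x)" "0 \<le> fan_height x" "fan_height x \<le> t" by auto
qed

lemma fan_segment_mono: "s \<le> t \<Longrightarrow> fan_segment Y y s \<subseteq> fan_segment Y y t"
  unfolding fan_segment_def by auto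

lemma arc_parametrization:
  assumes "homeomorphic_map (top_of_set {0..1::real}) (subtopology X A) \<gamma>" "A \<subseteq> topspace X"
  shows "continuous_map (top_of_set {0..1}) X \<gamma>" "\<gamma> ` {0..1} = A" "inj_on \<gamma> {0..1}"
proof -
  show "continuous_map (top_of_set {0..1}) X \<gamma>"
    using continuous_map_into_fulltopology[OF homeomorphic_imp_continuous_map[OF assms(1)]] .
  show "\<gamma> ` {0..1} = A"
    using homeomorphic_imp_surjective_map[OF assms(1)] assms(2) by auto
  show "inj_on \<gamma> {0..1}" using homeomorphic_imp_injective_map[OF assms(1)] by simp
qed

lemma continuous_on_height_arc:
  assumes "homeomorphic_map (top_of_set {0..1::real}) (subtopology (fan_C Y) A) \<gamma>"
    and "A \<subseteq> topspace (fan_C Y)"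
  shows "continuous_on {0..1} (fan_height \<circ> \<gamma>)"
  using continuous_map_compose[OF arc_parametrization(1)[OF assms] continuous_map_fan_height] by simp

lemma inj_on_height_arc_in_ray:
  assumes "inj_on \<gamma> {0..1::real}" "I \<subseteq> {0..1}"
    and "\<And>x. x \<in> I \<Longrightarrow> \<gamma> x = fan_q Y (y, fan_height (\<gamma> x))"
  shows "inj_on (fan_height \<circ> \<gamma>) I"
proof (rule inj_onI)
  fix a b assume "a \<in> I" "b \<in> I" "(fan_height \<circ> \<gamma>) a = (fan_height \<circ> \<gamma>) b"
  then have "\<gamma> a = \<gamma> b" using assms(3) by (metis comp_apply)
  then show "a = b" using assms(1,2) \<open>a \<in> I\<close> \<open>b \<in> I\<close> by (auto dest: inj_onD)
qed

lemma height_image_arc_in_ray: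
  assumes "homeomorphic_map (top_of_set {0..1::real}) (subtopology (fan_C Y) A) \<gamma>"
    and "A \<subseteq> topspace (fan_C Y)"
    and "\<And>x. x \<in> {0..1} \<Longrightarrow> \<gamma> x = fan_q Y (y, fan_height (\<gamma> x))"
  shows "(fan_height \<circ> \<gamma>) ` {0..1} = closed_segment (fan_height (\<gamma> 0)) (fan_height (\<gamma> 1))"
  using continuous_injective_image_segment_1[of 0 1 "fan_height \<circ> \<gamma>"]
    continuous_on_height_arc[OF assms(1,2)]
    inj_on_height_arc_in_ray[OF arc_parametrization(3)[OF assms(1,2)] order_refl assms(3)]
  by (simp add: closed_segment_eq_real_ivl)

lemma fence_subset_fan_F: "fence Y J \<subseteq> fan_F Y"
  unfolding fence_def by auto

lemma fence_mono: "K \<subseteq> J \<Longrightarrow> fence Y K \<subseteq> fence Y J"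
  unfolding fence_def by auto

lemma subtopology_fence: "subtopology (top_of_set (fan_F Y)) (fence Y J) = top_of_set (fence Y J)"
  using fence_subset_fan_F[of Y J] by (simp add: subtopology_subtopology Int_absorb1)

section \<open>Fans over zero-dimensional spaces\<close>

text \<open>These are the only properties of the Cantor set that the argument uses.\<close>
locale zero_dimensional_fan =
  fixes Y :: "'a::topological_space set"
  assumes t1_space_base: "t1_space (top_of_set Y)"
    and zero_dimensional_base: "zero_dimensional_space (top_of_set Y)"
begin

lemma clopen_separation:
  assumes "closedin (top_of_set Y) Z" "y \<in> Y" "y \<notin> Z"
  obtains V where "openin (top_of_set Y) V" "closedin (top_of_set Y) V" "y \<in> V" "V \<inter> Z = {}"
proof -
  have "openin (top_of_set Y) (Y - Z)" using assms(1) by (simp add: closedin_def)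
  then obtain V where "openin (top_of_set Y) V" "closedin (top_of_set Y) V" "y \<in> V" "V \<subseteq> Y - Z"
    using zero_dimensional_base assms(2,3) unfolding zero_dimensional_space_def by blast
  then show ?thesis using that by blast
qed

lemma separate_points:
  assumes "y1 \<in> Y" "y2 \<in> Y" "y1 \<noteq> y2"
  obtains V where "openin (top_of_set Y) V" "closedin (top_of_set Y) V" "y1 \<in> V" "y2 \<notin> V"
proof -
  have "closedin (top_of_set Y) {y2}"
    using t1_space_base assms(2) unfolding t1_space_closedin_singleton by simp
  moreover have "y1 \<notin> {y2}" using assms(3) by simp
  ultimately obtain V where "openin (top_of_set Y) V" "closedin (top_of_set Y) V" "y1 \<in> V" "V \<inter> {y2} = {}"
    using clopen_separation assms(1) by blast
  then show ?thesis using that by blast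
qed

lemma fan_C_separate_rays:
  assumes "y1 \<in> Y" "y2 \<in> Y" "y1 \<noteq> y2"
  obtains U1 U2 where "openin (fan_C Y) U1" "openin (fan_C Y) U2" "U1 \<inter> U2 = {}"
    "topspace (fan_C Y) - {fan_top Y} \<subseteq> U1 \<union> U2"
    "\<forall>s\<in>{0<..1}. fan_q Y (y1, s) \<in> U1" "\<forall>s\<in>{0<..1}. fan_q Y (y2, s) \<in> U2"
proof -
  obtain V where V: "openin (top_of_set Y) V" "closedin (top_of_set Y) V" "y1 \<in> V" "y2 \<notin> V"
    using separate_points[OF assms] .
  have V': "openin (top_of_set Y) (Y - V)" using V(2) by (simp add: closedin_def)
  define U1 where "U1 = fan_q Y ` {p \<in> fan_F Y. fst p \<in> V \<and> snd p > 0}"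
  define U2 where "U2 = fan_q Y ` {p \<in> fan_F Y. fst p \<in> Y - V \<and> snd p > 0}"
  have "openin (fan_C Y) U1" "openin (fan_C Y) U2"
    unfolding U1_def U2_def using openin_fan_C_above[OF V(1)] openin_fan_C_above[OF V'] by auto
  moreover have "U1 \<inter> U2 = {}"
  proof (rule ccontr)
    assume "U1 \<inter> U2 \<noteq> {}"
    then obtain p p' where "p \<in> fan_F Y" "fst p \<in> V" "snd p > 0" "p' \<in> fan_F Y" "fst p' \<notin> V"
      "fan_q Y p = fan_q Y p'"
      unfolding U1_def U2_def by auto
    then show False using fan_q_eq_imp_eq by (metis less_irrefl)
  qed
  moreover have "topspace (fan_C Y) - {fan_top Y} \<subseteq> U1 \<union> U2"
  proof
    fix c assume "c \<in> topspace (fan_C Y) - {fan_top Y}"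
    then obtain y s where "(y, s) \<in> fan_F Y" "s > 0" "c = fan_q Y (y, s)"
      using fan_C_point_off_top by blast
    then show "c \<in> U1 \<union> U2" unfolding U1_def U2_def by (cases "y \<in> V") force+
  qed
  moreover have "\<forall>s\<in>{0<..1}. fan_q Y (y1, s) \<in> U1" "\<forall>s\<in>{0<..1}. fan_q Y (y2, s) \<in> U2"
    unfolding U1_def U2_def using assms V by force+
  ultimately show ?thesis using that by blast
qed

lemma Hausdorff_fan_C: "Hausdorff_space (fan_C Y)"
  unfolding Hausdorff_space_def
proof (intro allI impI, elim conjE)
  fix c1 c2 assume c1: "c1 \<in> topspace (fan_C Y)" and c2: "c2 \<in> topspace (fan_C Y)" and ne: "c1 \<noteq> c2"
  obtain y1 s1 where 1: "(y1, s1) \<in> fan_F Y" "c1 = fan_q Y (y1, s1)" using fan_C_point_cases[OF c1] .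
  obtain y2 s2 where 2: "(y2, s2) \<in> fan_F Y" "c2 = fan_q Y (y2, s2)" using fan_C_point_cases[OF c2] .
  show "\<exists>U V. openin (fan_C Y) U \<and> openin (fan_C Y) V \<and> c1 \<in> U \<and> c2 \<in> V \<and> disjnt U V"
  proof (cases "s1 = s2")
    case False
    then obtain B1 B2 where B: "open B1" "open B2" "s1 \<in> B1" "s2 \<in> B2" "B1 \<inter> B2 = {}"
      using hausdorff[OF False] by blast
    let ?U = "{c \<in> topspace (fan_C Y). fan_height c \<in> B1}"
    let ?V = "{c \<in> topspace (fan_C Y). fan_height c \<in> B2}"
    have "openin (fan_C Y) ?U" "openin (fan_C Y) ?V"
      using openin_continuous_map_preimage[OF continuous_map_fan_height] B(1,2) by auto
    moreover have "c1 \<in> ?U" "c2 \<in> ?V" using 1 2 c1 c2 B(3,4) by auto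
    moreover have "disjnt ?U ?V" using B(5) by (auto simp: disjnt_def)
    ultimately show ?thesis by blast
  next
    case True
    then have s1: "0 < s1" "s1 \<le> 1"
      using ne 1 2 fan_q_zero[of y1 Y] fan_q_zero[of y2 Y] by (auto simp: order_le_less)
    have "y1 \<noteq> y2" "y1 \<in> Y" "y2 \<in> Y" using ne 1 2 True by auto
    obtain U1 U2 where U: "openin (fan_C Y) U1" "openin (fan_C Y) U2" "U1 \<inter> U2 = {}"
      "topspace (fan_C Y) - {fan_top Y} \<subseteq> U1 \<union> U2"
      "\<forall>s\<in>{0<..1}. fan_q Y (y1, s) \<in> U1" "\<forall>s\<in>{0<..1}. fan_q Y (y2, s) \<in> U2"
      by (rule fan_C_separate_rays[OF \<open>y1 \<in> Y\<close> \<open>y2 \<in> Y\<close> \<open>y1 \<noteq> y2\<close>])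
    have "c1 \<in> U1" "c2 \<in> U2" using U(5,6) s1 1 2 True by auto
    then show ?thesis using U(1-3) unfolding disjnt_def by blast
  qed
qed

lemma connectedin_fan_C_ray:
  assumes S: "connectedin (fan_C Y) S" "fan_top Y \<notin> S"
    and ys: "(y, s) \<in> fan_F Y" "fan_q Y (y, s) \<in> S" and c: "c \<in> S"
  obtains u where "0 < u" "u \<le> 1" "c = fan_q Y (y, u)"
proof -
  have ST: "S \<subseteq> topspace (fan_C Y)" using connectedin_subset_topspace[OF S(1)] .
  obtain y' u where y'u: "(y', u) \<in> fan_F Y" "u > 0" "c = fan_q Y (y', u)"
    using fan_C_point_off_top[of c Y] ST c S(2) by blast
  have "s > 0" using ys S(2) fan_q_zero[of y Y] by (cases "s = 0") auto
  show ?thesis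
  proof (cases "y' = y")
    case True then show ?thesis using y'u that by auto
  next
    case False
    have "y \<in> Y" "y' \<in> Y" "y \<noteq> y'" using ys y'u False by auto
    obtain U1 U2 where U: "openin (fan_C Y) U1" "openin (fan_C Y) U2" "U1 \<inter> U2 = {}"
      "topspace (fan_C Y) - {fan_top Y} \<subseteq> U1 \<union> U2"
      "\<forall>s\<in>{0<..1}. fan_q Y (y, s) \<in> U1" "\<forall>s\<in>{0<..1}. fan_q Y (y', s) \<in> U2"
      by (rule fan_C_separate_rays[OF \<open>y \<in> Y\<close> \<open>y' \<in> Y\<close> \<open>y \<noteq> y'\<close>])
    have "S \<subseteq> U1 \<union> U2" using ST S(2) U(4) by blast
    moreover have "U1 \<inter> S \<noteq> {}" using U(5) ys \<open>s > 0\<close> by auto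
    moreover have "U2 \<inter> S \<noteq> {}" using U(6) y'u c by auto
    ultimately show ?thesis using connectedinD[OF S(1) U(1,2)] U(3) by blast
  qed
qed

lemma arc_fan_segment:
  assumes y: "y \<in> Y" and t: "0 < t" "t \<le> 1"
  shows "arc_from_to (fan_C Y) (fan_segment Y y t) (fan_top Y) (fan_q Y (y, t))"
proof -
  let ?\<gamma> = "\<lambda>c. fan_q Y (y, t * c)"
  have im: "?\<gamma> ` {0..1} = fan_segment Y y t"
  proof
    show "?\<gamma> ` {0..1} \<subseteq> fan_segment Y y t"
      using t by (auto simp: mult_le_one intro!: fan_segment_memI)
    show "fan_segment Y y t \<subseteq> ?\<gamma> ` {0..1}"
    proof
      fix x assume "x \<in> fan_segment Y y t"
      then obtain s where s: "s \<in> {0..t}" "x = fan_q Y (y, s)" unfolding fan_segment_def by auto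
      then have "s / t \<in> {0..1}" "t * (s / t) = s" using t by auto
      then show "x \<in> ?\<gamma> ` {0..1}" using s by (metis image_eqI)
    qed
  qed
  have "homeomorphic_map (top_of_set {0..1}) (subtopology (fan_C Y) (fan_segment Y y t)) ?\<gamma>"
  proof (rule continuous_imp_homeomorphic_map)
    have "continuous_map (top_of_set {0..1}) (fan_C Y) ?\<gamma>"
      using t by (intro continuous_map_fan_ray[OF y]) (auto intro!: continuous_intros simp: mult_le_one)
    then show "continuous_map (top_of_set {0..1}) (subtopology (fan_C Y) (fan_segment Y y t)) ?\<gamma>"
      by (rule continuous_map_into_subtopology) (use im in auto)
    show "compact_space (top_of_set {0..1::real})" by (rule compact_space_subtopology) simp
    show "Hausdorff_space (subtopology (fan_C Y) (fan_segment Y y t))"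
      by (rule Hausdorff_space_subtopology[OF Hausdorff_fan_C])
    show "?\<gamma> ` topspace (top_of_set {0..1}) = topspace (subtopology (fan_C Y) (fan_segment Y y t))"
      using im fan_segment_subset_topspace[OF y t(2)] by auto
    show "inj_on ?\<gamma> (topspace (top_of_set {0..1}))"
    proof (rule inj_onI)
      fix a b assume ab: "a \<in> topspace (top_of_set {0..1::real})" "b \<in> topspace (top_of_set {0..1::real})"
        "?\<gamma> a = ?\<gamma> b"
      have "(y, t * a) \<in> fan_F Y" "(y, t * b) \<in> fan_F Y" using ab(1,2) y t by (auto simp: mult_le_one)
      then have "t * a = t * b" using fan_height_fan_q ab(3) by (metis snd_conv)
      then show "a = b" using t by simp
    qed
  qed
  then show ?thesis
    unfolding arc_from_to_def using fan_segment_subset_topspace[OF y t(2)] fan_q_zero[OF y] by auto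
qed


lemma arc_from_top_eq_fan_segment:
  assumes A: "arc_from_to (fan_C Y) A (fan_top Y) (fan_q Y (y, t))"
    and yt: "(y, t) \<in> fan_F Y" "t > 0"
  shows "A = fan_segment Y y t"
proof -
  obtain \<gamma> where hm: "homeomorphic_map (top_of_set {0..1::real}) (subtopology (fan_C Y) A) \<gamma>"
    and \<gamma>0: "\<gamma> 0 = fan_top Y" and \<gamma>1: "\<gamma> 1 = fan_q Y (y, t)" and AT: "A \<subseteq> topspace (fan_C Y)"
    using A unfolding arc_from_to_def by blast
  note \<gamma> = arc_parametrization[OF hm AT]
  have y: "y \<in> Y" using yt by simp
  have conn: "connectedin (fan_C Y) (\<gamma> ` {0<..1})"
    by (rule connectedin_continuous_map_image[OF \<gamma>(1)]) (auto simp: connectedin_subtopology)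
  have top: "fan_top Y \<notin> \<gamma> ` {0<..1}"
  proof
    assume "fan_top Y \<in> \<gamma> ` {0<..1}"
    then obtain x where "x \<in> {0<..1}" "\<gamma> x = \<gamma> 0" using \<gamma>0 by auto
    then show False using inj_onD[OF \<gamma>(3), of x 0] by auto
  qed
  have ray: "\<gamma> x = fan_q Y (y, fan_height (\<gamma> x))" if x: "x \<in> {0..1}" for x
  proof (cases "x = 0")
    case True then show ?thesis using \<gamma>0 fan_q_zero[OF y] fan_height_top[OF y] by simp
  next
    case False
    have "fan_q Y (y, t) \<in> \<gamma> ` {0<..1}" "\<gamma> x \<in> \<gamma> ` {0<..1}" using \<gamma>1 x False by force+
    then obtain u where "0 < u" "u \<le> 1" "\<gamma> x = fan_q Y (y, u)"
      using connectedin_fan_C_ray[OF conn top yt(1)] by blast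
    then show ?thesis using y by simp
  qed
  have "(fan_height \<circ> \<gamma>) ` {0..1} = {0..t}"
    using height_image_arc_in_ray[OF hm AT ray] \<gamma>0 \<gamma>1 yt fan_height_top[OF y]
    by (simp add: closed_segment_eq_real_ivl)
  moreover have "A = (\<lambda>s. fan_q Y (y, s)) ` ((fan_height \<circ> \<gamma>) ` {0..1})"
    unfolding \<gamma>(2)[symmetric] image_comp using ray by (auto intro: image_cong)
  ultimately show ?thesis unfolding fan_segment_def by simp
qed

lemma fan_segment_not_arc_endpoint:
  assumes y: "y \<in> Y" and t: "0 < t" "t < u" "u \<le> 1"
  shows "\<not> arc_endpoint (fan_C Y) (fan_segment Y y u) (fan_q Y (y, t))"
proof
  assume "arc_endpoint (fan_C Y) (fan_segment Y y u) (fan_q Y (y, t))"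
  then obtain \<gamma> where hm: "homeomorphic_map (top_of_set {0..1::real}) (subtopology (fan_C Y) (fan_segment Y y u)) \<gamma>"
    and \<gamma>0: "\<gamma> 0 = fan_q Y (y, t)"
    unfolding arc_endpoint_def arc_from_to_def by blast
  have ST: "fan_segment Y y u \<subseteq> topspace (fan_C Y)" using fan_segment_subset_topspace[OF y t(3)] .
  note \<gamma> = arc_parametrization[OF hm ST]
  have ray: "\<gamma> x = fan_q Y (y, fan_height (\<gamma> x))" if "x \<in> {0..1}" for x
    using fan_segment_memE(1)[OF _ y t(3)] \<gamma>(2) that by blast
  have "(fan_height \<circ> \<gamma>) ` {0..1} = fan_height ` fan_segment Y y u"
    unfolding \<gamma>(2)[symmetric] image_comp ..
  also have "\<dots> = {0..u}"
    unfolding fan_segment_def image_image using y t by (auto intro: image_cong)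
  finally have "closed_segment t (fan_height (\<gamma> 1)) = {0..u}"
    using height_image_arc_in_ray[OF hm ST ray] \<gamma>0 y t by simp
  then show False using t by (auto simp: closed_segment_eq_real_ivl split: if_splits)
qed

lemma end_point_bounds_fan_segment:
  assumes e: "end_point (fan_C Y) J (fan_q Y (y, t))" and y: "y \<in> Y" "0 < t"
    and J: "fan_segment Y y u \<subseteq> J" "u \<le> 1"
  shows "u \<le> t"
proof (rule ccontr)
  assume "\<not> u \<le> t"
  then have "is_arc (fan_C Y) (fan_segment Y y u)"
    using arc_fan_segment[OF y(1) _ J(2)] y(2) unfolding is_arc_def by force
  moreover have "fan_q Y (y, t) \<in> fan_segment Y y u" using \<open>\<not> u \<le> t\<close> y by (auto intro: fan_segment_memI)
  ultimately have "arc_endpoint (fan_C Y) (fan_segment Y y u) (fan_q Y (y, t))"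
    using e J(1) unfolding end_point_def by blast
  then show False using fan_segment_not_arc_endpoint[OF y] \<open>\<not> u \<le> t\<close> J(2) by simp
qed


text \<open>Near c the arc stays in the ray over y, where its height is continuous and injective
  and would have an interior maximum at c.\<close>
lemma ray_maximum_not_interior_of_arc:
  assumes hm: "homeomorphic_map (top_of_set {0..1::real}) (subtopology (fan_C Y) A) \<gamma>"
    and AT: "A \<subseteq> topspace (fan_C Y)"
    and yt: "(y, t) \<in> fan_F Y" "t > 0"
    and c: "0 < c" "c < 1" "\<gamma> c = fan_q Y (y, t)"
    and max: "\<And>s. (y, s) \<in> fan_F Y \<Longrightarrow> fan_q Y (y, s) \<in> A \<Longrightarrow> s \<le> t"
  shows False
proof -
  note \<gamma> = arc_parametrization[OF hm AT]
  define f where "f = fan_height \<circ> \<gamma>"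
  have fc: "continuous_on {0..1} f" unfolding f_def by (rule continuous_on_height_arc[OF hm AT])
  have fct: "f c = t" unfolding f_def using c(3) yt(1) by simp
  obtain \<epsilon> where \<epsilon>: "\<epsilon> > 0" "\<forall>x\<in>{0..1}. dist c x < \<epsilon> \<longrightarrow> f x \<noteq> 0"
    using continuous_on_avoid[OF fc, of c 0] c fct yt(2) by auto
  define d where "d = min \<epsilon> (min c (1 - c)) / 2"
  have "0 < min \<epsilon> (min c (1 - c))" "min \<epsilon> (min c (1 - c)) \<le> \<epsilon>"
    "min \<epsilon> (min c (1 - c)) \<le> c" "min \<epsilon> (min c (1 - c)) \<le> 1 - c"
    using \<epsilon>(1) c by auto
  then have d: "0 < d" "d < \<epsilon>" "d < c" "c + d < 1" unfolding d_def by linarith+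
  define I where "I = {c - d..c + d}"
  have I01: "I \<subseteq> {0..1}" using d unfolding I_def by auto
  have conn: "connectedin (fan_C Y) (\<gamma> ` I)"
    by (rule connectedin_continuous_map_image[OF \<gamma>(1)]) (use I01 in \<open>auto simp: connectedin_subtopology I_def\<close>)
  have top: "fan_top Y \<notin> \<gamma> ` I"
  proof
    assume "fan_top Y \<in> \<gamma> ` I"
    then obtain x where x: "x \<in> I" "\<gamma> x = fan_top Y" by auto
    then have "f x \<noteq> 0" using \<epsilon>(2) I01 d unfolding I_def by (auto simp: dist_real_def)
    then show False using x(2) fan_height_top[of y Y] yt(1) unfolding f_def by simp
  qed
  have cI: "c \<in> I" using d unfolding I_def by auto
  have ray: "\<gamma> x = fan_q Y (y, f x)" "f x \<le> t" if x: "x \<in> I" for x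
  proof -
    obtain u where "0 < u" "u \<le> 1" "\<gamma> x = fan_q Y (y, u)"
      using connectedin_fan_C_ray[OF conn top yt(1)] c(3) cI x by blast
    moreover have "\<gamma> x \<in> A" using \<gamma>(2) I01 x by blast
    ultimately show "\<gamma> x = fan_q Y (y, f x)" "f x \<le> t" using yt max[of u] unfolding f_def by auto
  qed
  have "inj_on f I"
    unfolding f_def by (rule inj_on_height_arc_in_ray[OF \<gamma>(3) I01]) (use ray(1) in \<open>simp add: f_def\<close>)
  moreover have "continuous_on I f" using continuous_on_subset[OF fc I01] .
  ultimately have "(f (c - d) < f c \<and> f c < f (c + d)) \<or> (f (c + d) < f c \<and> f c < f (c - d))"
    using continuous_inj_imp_mono[of "c - d" c "c + d" f] d unfolding I_def by auto
  moreover have "f (c - d) \<le> t" "f (c + d) \<le> t" using ray(2) d unfolding I_def by auto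
  ultimately show False using fct by auto
qed

lemma end_point_ray_maximum:
  assumes JT: "J \<subseteq> topspace (fan_C Y)" and yt: "(y, t) \<in> fan_F Y" "t > 0"
    and eJ: "fan_q Y (y, t) \<in> J"
    and max: "\<And>s. (y, s) \<in> fan_F Y \<Longrightarrow> fan_q Y (y, s) \<in> J \<Longrightarrow> s \<le> t"
  shows "end_point (fan_C Y) J (fan_q Y (y, t))"
  unfolding end_point_def
proof (intro conjI allI impI, fact eJ, elim conjE)
  fix A assume AJ: "A \<subseteq> J" and arc: "is_arc (fan_C Y) A" and eA: "fan_q Y (y, t) \<in> A"
  obtain \<gamma> a b where AT: "A \<subseteq> topspace (fan_C Y)"
    and hm: "homeomorphic_map (top_of_set {0..1::real}) (subtopology (fan_C Y) A) \<gamma>"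
    and \<gamma>0: "\<gamma> 0 = a" and \<gamma>1: "\<gamma> 1 = b"
    using arc unfolding is_arc_def arc_from_to_def by blast
  obtain c where c: "c \<in> {0..1}" "\<gamma> c = fan_q Y (y, t)"
    using eA arc_parametrization(2)[OF hm AT] by (metis imageE)
  consider "c = 0" | "c = 1" | "0 < c" "c < 1" using c(1) by fastforce
  then show "arc_endpoint (fan_C Y) A (fan_q Y (y, t))"
  proof cases
    case 1
    then show ?thesis unfolding arc_endpoint_def arc_from_to_def using AT hm c \<gamma>1 by blast
  next
    case 2
    have "homeomorphic_map (top_of_set {0..1::real}) (top_of_set {0..1}) (\<lambda>x. 1 - x)"
      unfolding homeomorphic_map_maps homeomorphic_maps_def
      by (intro exI[of _ "\<lambda>x. 1 - x"]) (auto intro!: continuous_intros)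
    from homeomorphic_map_compose[OF this hm]
    have "homeomorphic_map (top_of_set {0..1::real}) (subtopology (fan_C Y) A) (\<gamma> \<circ> (\<lambda>x. 1 - x))" .
    moreover have "(\<gamma> \<circ> (\<lambda>x. 1 - x)) 0 = fan_q Y (y, t)" "(\<gamma> \<circ> (\<lambda>x. 1 - x)) 1 = a"
      using c 2 \<gamma>0 by auto
    ultimately show ?thesis unfolding arc_endpoint_def arc_from_to_def using AT by blast
  next
    case 3
    then show ?thesis using ray_maximum_not_interior_of_arc[OF hm AT yt _ _ c(2)] max AJ by blast
  qed
qed

lemma closed_connected_contains_fan_segment:
  assumes Jcl: "closedin (fan_C Y) J" and Jconn: "connectedin (fan_C Y) J" and vJ: "fan_top Y \<in> J"
    and yt: "(y, t) \<in> fan_F Y" "fan_q Y (y, t) \<in> J"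
  shows "fan_segment Y y t \<subseteq> J"
proof
  fix x assume "x \<in> fan_segment Y y t"
  then obtain s where s: "0 \<le> s" "s \<le> t" "x = fan_q Y (y, s)" unfolding fan_segment_def by auto
  have y: "y \<in> Y" using yt by simp
  show "x \<in> J"
  proof (rule ccontr)
    assume nJ: "x \<notin> J"
    have "s \<noteq> 0" "s \<noteq> t" using nJ vJ yt s fan_q_zero[OF y] by auto
    then have s0: "0 < s" "s < t" using s by auto
    have "continuous_map (top_of_set Y) (fan_C Y) (\<lambda>y'. fan_q Y (y', s))"
    proof -
      have "continuous_map (top_of_set Y) (top_of_set (fan_F Y)) (\<lambda>y'. (y', s))"
        using s0 yt by (auto simp: image_subset_iff intro!: continuous_on_Pair continuous_on_const continuous_on_id)
      from continuous_map_compose[OF this continuous_map_fan_q] show ?thesis by (simp add: o_def)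
    qed
    then have Zcl: "closedin (top_of_set Y) {y' \<in> Y. fan_q Y (y', s) \<in> J}"
      using closedin_continuous_map_preimage[OF _ Jcl] by force
    have yZ: "y \<notin> {y' \<in> Y. fan_q Y (y', s) \<in> J}" using nJ s by simp
    obtain V where V: "openin (top_of_set Y) V" "closedin (top_of_set Y) V" "y \<in> V"
      "V \<inter> {y' \<in> Y. fan_q Y (y', s) \<in> J} = {}"
      by (rule clopen_separation[OF Zcl y yZ])
    obtain U1 U2 where U: "openin (fan_C Y) U1" "openin (fan_C Y) U2" "U1 \<inter> U2 = {}"
      "topspace (fan_C Y) - (\<lambda>y. fan_q Y (y, s)) ` V \<subseteq> U1 \<union> U2"
      "\<forall>y\<in>V. \<forall>u\<in>{s<..1}. fan_q Y (y, u) \<in> U1" "\<forall>y\<in>Y. fan_q Y (y, 0) \<in> U2"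
      by (rule fan_C_split_at_height[OF V(1,2) s0(1)])
    have "J \<subseteq> U1 \<union> U2"
    proof
      fix c assume c: "c \<in> J"
      then have "c \<in> topspace (fan_C Y) - (\<lambda>y. fan_q Y (y, s)) ` V"
        using V(4) openin_subset[OF V(1)] connectedin_subset_topspace[OF Jconn] by auto
      then show "c \<in> U1 \<union> U2" using U(4) by blast
    qed
    moreover have "fan_q Y (y, t) \<in> U1" using U(5) V(3) s0 yt by auto
    moreover have "fan_top Y \<in> U2" using U(6) y fan_q_zero[OF y] by auto
    ultimately show False using connectedinD[OF Jconn U(1,2)] U(3) yt(2) vJ by blast
  qed
qed

lemma compact_connected_ray_maximum:
  assumes Jc: "compactin (fan_C Y) J" and vJ: "fan_top Y \<in> J" and y: "y \<in> Y"
  obtains t where "(y, t) \<in> fan_F Y" "fan_q Y (y, t) \<in> J"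
    "\<And>s. (y, s) \<in> fan_F Y \<Longrightarrow> fan_q Y (y, s) \<in> J \<Longrightarrow> s \<le> t"
proof -
  have Jcl: "closedin (fan_C Y) J" using compactin_imp_closedin[OF Hausdorff_fan_C Jc] .
  define Z where "Z = {s \<in> {0..1}. fan_q Y (y, s) \<in> J}"
  have "closedin (top_of_set {0..1}) Z"
    using closedin_continuous_map_preimage[OF continuous_map_fan_ray[OF y, of "{0..1}" id] Jcl]
    unfolding Z_def by simp
  then have "closed Z" by (rule closedin_closed_trans) simp
  moreover have "0 \<in> Z" using vJ fan_q_zero[OF y] unfolding Z_def by simp
  moreover have "bdd_above Z" unfolding Z_def by (rule bdd_aboveI[of _ 1]) auto
  ultimately have "Sup Z \<in> Z" "\<And>s. s \<in> Z \<Longrightarrow> s \<le> Sup Z"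
    using closed_contains_Sup cSup_upper by blast+
  then show ?thesis using that y unfolding Z_def by auto
qed


lemma fan_segment_in_legs:
  assumes Jc: "compactin (fan_C Y) J" and Jconn: "connectedin (fan_C Y) J" and vJ: "fan_top Y \<in> J"
    and ys: "(y, s) \<in> fan_F Y" "s > 0" "fan_q Y (y, s) \<in> J"
  obtains t where "s \<le> t" "t \<le> 1" "fan_segment Y y t \<in> legs (fan_C Y) (fan_top Y) J"
proof -
  have y: "y \<in> Y" using ys by simp
  obtain t where t: "(y, t) \<in> fan_F Y" "fan_q Y (y, t) \<in> J"
    "\<And>s. (y, s) \<in> fan_F Y \<Longrightarrow> fan_q Y (y, s) \<in> J \<Longrightarrow> s \<le> t"
    using compact_connected_ray_maximum[OF Jc vJ y] by blast
  have "s \<le> t" using t(3) ys by blast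
  then have "t > 0" using ys by simp
  have "fan_segment Y y t \<in> legs (fan_C Y) (fan_top Y) J"
    unfolding legs_def
  proof (intro CollectI conjI exI)
    show "fan_segment Y y t \<subseteq> J"
      using closed_connected_contains_fan_segment[OF compactin_imp_closedin[OF Hausdorff_fan_C Jc]
          Jconn vJ t(1,2)] .
    show "end_point (fan_C Y) J (fan_q Y (y, t))"
      using end_point_ray_maximum[OF compactin_subset_topspace[OF Jc] t(1) \<open>t > 0\<close> t(2,3)] .
    show "fan_q Y (y, t) \<noteq> fan_top Y" using fan_q_eq_top_iff[OF t(1)] \<open>t > 0\<close> by simp
    show "arc_from_to (fan_C Y) (fan_segment Y y t) (fan_top Y) (fan_q Y (y, t))"
      using arc_fan_segment[OF y \<open>t > 0\<close>] t(1) by simp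
  qed
  then show ?thesis using that \<open>s \<le> t\<close> t(1) by simp
qed

lemma legsE:
  assumes "A \<in> legs (fan_C Y) (fan_top Y) J" "J \<subseteq> topspace (fan_C Y)"
  obtains y t where "(y, t) \<in> fan_F Y" "t > 0" "A = fan_segment Y y t" "A \<subseteq> J"
    "end_point (fan_C Y) J (fan_q Y (y, t))"
proof -
  obtain e where A: "A \<subseteq> J" "end_point (fan_C Y) J e" "e \<noteq> fan_top Y"
    "arc_from_to (fan_C Y) A (fan_top Y) e"
    using assms(1) unfolding legs_def by blast
  then have "e \<in> topspace (fan_C Y)" using assms(2) unfolding end_point_def by blast
  then obtain y t where yt: "(y, t) \<in> fan_F Y" "t > 0" "e = fan_q Y (y, t)"
    using fan_C_point_off_top[of e Y] A(3) by blast
  show ?thesis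
    using that[OF yt(1,2) arc_from_top_eq_fan_segment[OF _ yt(1,2)] A(1)] A(2,4) yt(3) by simp
qed

section \<open>Lifting retractions to the fence\<close>

lemma connected_subset_fan_F_fibre:
  assumes P: "connected P" "P \<subseteq> fan_F Y" and p: "p \<in> P" "p' \<in> P"
  shows "fst p = fst p'"
proof (rule ccontr)
  assume ne: "fst p \<noteq> fst p'"
  have Y: "fst p \<in> Y" "fst p' \<in> Y" using P(2) p by (auto simp: fan_F_def)
  obtain V where V: "openin (top_of_set Y) V" "closedin (top_of_set Y) V" "fst p \<in> V" "fst p' \<notin> V"
    by (rule separate_points[OF Y ne])
  have "connected (fst ` P)" by (rule connected_continuous_image[OF continuous_on_fst[OF continuous_on_id] P(1)])
  moreover have "fst ` P \<subseteq> Y" using P(2) by (auto simp: fan_F_def)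
  ultimately have "connectedin (top_of_set Y) (fst ` P)" by (simp add: connectedin_subtopology)
  then have "fst ` P \<subseteq> V \<or> disjnt (fst ` P) V" using connectedin_clopen_cases V(1,2) by blast
  then show False using V(3,4) p by (auto simp: disjnt_def)
qed

lemma fence_retraction_fibre:
  assumes R: "retraction_onto (top_of_set (fan_F Y)) (fence Y J) (fence Y K) R"
    and vK: "fan_top Y \<in> K" and ys: "(y, s) \<in> fan_F Y" "fan_segment Y y s \<subseteq> J"
  obtains u where "(y, u) \<in> fan_F Y" "R (y, s) = (y, u)" "fan_segment Y y u \<subseteq> K"
proof -
  have Rc: "continuous_map (top_of_set (fence Y J)) (top_of_set (fence Y K)) R"
    and Rfix: "\<And>z. z \<in> fence Y K \<Longrightarrow> R z = z"
    using R unfolding retraction_onto_def subtopology_fence by auto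
  have y: "y \<in> Y" using ys by simp
  define L where "L = (\<lambda>w. (y, w)) ` {0..s}"
  have LJ: "L \<subseteq> fence Y J"
    using ys fan_segment_memI[of _ s Y y] unfolding L_def fence_def by auto
  have "connected L" unfolding L_def
    by (rule connected_continuous_image) (auto intro!: continuous_intros)
  then have "connectedin (top_of_set (fence Y J)) L" using LJ by (simp add: connectedin_subtopology)
  then have "connectedin (top_of_set (fence Y K)) (R ` L)"
    by (rule connectedin_continuous_map_image[OF Rc])
  then have P: "connected (R ` L)" "R ` L \<subseteq> fence Y K" by (auto simp: connectedin_subtopology)
  have PF: "R ` L \<subseteq> fan_F Y" using P(2) fence_subset_fan_F by blast
  have "(y, 0) \<in> fence Y K" using y vK fan_q_zero[OF y] unfolding fence_def by auto
  moreover have "(y, 0) \<in> L" unfolding L_def using ys by auto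
  ultimately have y0: "(y, 0) \<in> R ` L" using Rfix by force
  have fibre: "fst p = y" if "p \<in> R ` L" for p
    using connected_subset_fan_F_fibre[OF P(1) PF that y0] by simp
  define u where "u = snd (R (y, s))"
  have RL: "R (y, s) \<in> R ` L" unfolding L_def using ys by auto
  then have Rys: "R (y, s) = (y, u)" using fibre unfolding u_def by (metis prod.collapse)
  have "connected (snd ` R ` L)"
    using P(1) by (rule connected_continuous_image[rotated]) (intro continuous_intros)
  moreover have "0 \<in> snd ` R ` L" using imageI[OF y0, of snd] by simp
  moreover have "u \<in> snd ` R ` L" using imageI[OF RL, of snd] Rys by simp
  ultimately have Icc: "{0..u} \<subseteq> snd ` R ` L" by (rule connected_contains_Icc)
  have "fan_q Y (y, w) \<in> K" if w: "w \<in> {0..u}" for w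
  proof -
    obtain p where p: "p \<in> R ` L" "snd p = w" using subsetD[OF Icc w] by (auto simp del: image_image)
    then have "p = (y, w)" using fibre[OF p(1)] by (cases p) simp
    then show ?thesis using p(1) P(2) unfolding fence_def by blast
  qed
  then have "fan_segment Y y u \<subseteq> K" unfolding fan_segment_def by auto
  moreover have "(y, u) \<in> fan_F Y" using subsetD[OF PF RL] unfolding Rys .
  ultimately show ?thesis using that Rys by blast
qed

lemma fence_lift_imp_simple_retraction:
  assumes JT: "J \<subseteq> topspace (fan_C Y)" and vK: "fan_top Y \<in> K" and KJ: "K \<subseteq> J"
    and R: "retraction_onto (top_of_set (fan_F Y)) (fence Y J) (fence Y K) R"
    and lift: "\<forall>x \<in> fence Y J. fan_q Y (R x) = r (fan_q Y x)"
  shows "simple_retraction (fan_C Y) (fan_top Y) J r"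
  unfolding simple_retraction_def
proof
  fix A assume "A \<in> legs (fan_C Y) (fan_top Y) J"
  then obtain y t where yt: "(y, t) \<in> fan_F Y" "t > 0" "A = fan_segment Y y t" "A \<subseteq> J"
    and e: "end_point (fan_C Y) J (fan_q Y (y, t))"
    by (rule legsE[OF _ JT])
  show "r ` A \<subseteq> A"
  proof
    fix z assume "z \<in> r ` A"
    then obtain s where s: "s \<in> {0..t}" "z = r (fan_q Y (y, s))" using yt(3) unfolding fan_segment_def by auto
    have ys: "(y, s) \<in> fan_F Y" using s yt(1) by simp
    have sJ: "fan_segment Y y s \<subseteq> J" using fan_segment_mono[of s t] s yt(3,4) by auto
    obtain u where u: "(y, u) \<in> fan_F Y" "R (y, s) = (y, u)" "fan_segment Y y u \<subseteq> K"
      by (rule fence_retraction_fibre[OF R vK ys sJ])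
    have "(y, s) \<in> fence Y J" using ys sJ fan_segment_memI[of s s Y y] s unfolding fence_def by auto
    then have "z = fan_q Y (y, u)" using lift u(2) s(2) by force
    moreover have "u \<le> t" using end_point_bounds_fan_segment[OF e _ yt(2)] u KJ yt(1) by auto
    ultimately show "z \<in> A" using yt(3) u(1) by (simp add: fan_segment_memI)
  qed
qed

lemma simple_retraction_preserves_rays:
  assumes Jc: "compactin (fan_C Y) J" and Jconn: "connectedin (fan_C Y) J"
    and vK: "fan_top Y \<in> K" and KJ: "K \<subseteq> J" and rK: "\<And>z. z \<in> K \<Longrightarrow> r z = z"
    and simple: "simple_retraction (fan_C Y) (fan_top Y) J r"
    and ys: "(y, s) \<in> fan_F Y" "fan_q Y (y, s) \<in> J"
  obtains u where "(y, u) \<in> fan_F Y" "r (fan_q Y (y, s)) = fan_q Y (y, u)"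
proof (cases "s = 0")
  case True
  then have "r (fan_q Y (y, s)) = fan_q Y (y, 0)" using rK vK fan_q_zero[of y Y] ys by simp
  then show ?thesis using that[of 0] ys by simp
next
  case False
  then obtain t where t: "s \<le> t" "t \<le> 1" "fan_segment Y y t \<in> legs (fan_C Y) (fan_top Y) J"
    using fan_segment_in_legs[OF Jc Jconn _ ys(1)] vK KJ ys by force
  have "fan_q Y (y, s) \<in> fan_segment Y y t" using ys t by (simp add: fan_segment_memI)
  then have "r (fan_q Y (y, s)) \<in> fan_segment Y y t" using simple t(3) unfolding simple_retraction_def by blast
  note h = fan_segment_memE[OF this _ t(2)]
  show ?thesis using that[of "fan_height (r (fan_q Y (y, s)))"] h ys t(2) by simp
qed

lemma simple_retraction_imp_fence_lift:
  assumes Jc: "compactin (fan_C Y) J" and Jconn: "connectedin (fan_C Y) J"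
    and vK: "fan_top Y \<in> K" and KJ: "K \<subseteq> J"
    and r: "retraction_onto (fan_C Y) J K r"
    and simple: "simple_retraction (fan_C Y) (fan_top Y) J r"
  shows "\<exists>R. retraction_onto (top_of_set (fan_F Y)) (fence Y J) (fence Y K) R \<and>
              (\<forall>x \<in> fence Y J. fan_q Y (R x) = r (fan_q Y x))"
proof -
  have rc: "continuous_map (subtopology (fan_C Y) J) (subtopology (fan_C Y) K) r"
    and rK: "\<And>z. z \<in> K \<Longrightarrow> r z = z" using r unfolding retraction_onto_def by auto
  define R where "R = (\<lambda>x. (fst x, fan_height (r (fan_q Y x))))"
  have lift: "fan_q Y (R x) = r (fan_q Y x)" "R x \<in> fan_F Y" if x: "x \<in> fence Y J" for x
  proof -
    obtain y s where ys: "x = (y, s)" "(y, s) \<in> fan_F Y" "fan_q Y (y, s) \<in> J"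
      using x unfolding fence_def by (cases x) auto
    obtain u where "(y, u) \<in> fan_F Y" "r (fan_q Y (y, s)) = fan_q Y (y, u)"
      by (rule simple_retraction_preserves_rays[OF Jc Jconn vK KJ rK simple ys(2,3)])
    then show "fan_q Y (R x) = r (fan_q Y x)" "R x \<in> fan_F Y" unfolding R_def ys(1) by simp_all
  qed
  have rJK: "r c \<in> K" if "c \<in> J" for c
    using continuous_map_image_subset_topspace[OF rc] compactin_subset_topspace[OF Jc] that by auto
  have "R x \<in> fence Y K" if "x \<in> fence Y J" for x
    using lift[OF that] rJK that unfolding fence_def by auto
  moreover have "R z = z" if "z \<in> fence Y K" for z
    using that rK fan_height_fan_q[of z Y] unfolding R_def fence_def by (cases z) auto
  moreover have "continuous_on (fence Y J) R"
  proof -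
    have "continuous_map (top_of_set (fence Y J)) (subtopology (fan_C Y) J) (fan_q Y)"
      using continuous_map_from_subtopology[OF continuous_map_fan_q, of Y "fence Y J"]
      unfolding subtopology_fence by (auto simp: fence_def intro: continuous_map_into_subtopology)
    then have "continuous_map (top_of_set (fence Y J)) euclideanreal (fan_height \<circ> r \<circ> fan_q Y)"
      using continuous_map_compose[OF _ continuous_map_from_subtopology[OF continuous_map_fan_height]]
        continuous_map_compose rc by (metis comp_assoc)
    then show ?thesis unfolding R_def by (auto simp: o_def intro!: continuous_intros)
  qed
  ultimately have "retraction_onto (top_of_set (fan_F Y)) (fence Y J) (fence Y K) R"
    unfolding retraction_onto_def subtopology_fence using fence_mono[OF KJ] by auto
  then show ?thesis using lift by blast
qed

end

lemma zero_dimensional_fan_cantor_set: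
  assumes "Y homeomorphic cantor_set"
  shows "zero_dimensional_fan Y"
proof
  have hs: "top_of_set Y homeomorphic_space top_of_set cantor_set"
    by (rule homeomorphic_imp_homeomorphic_space[OF assms])
  show "t1_space (top_of_set Y)"
    using homeomorphic_t1_space[OF hs] t1_space_subtopology[OF t1_space_euclidean] by blast
  show "zero_dimensional_space (top_of_set Y)"
    by (rule zero_dimensional_space_homeomorphic[OF hs zero_dimensional_space_real[OF interior_cantor_set]])
qed

theorem mainTheorem13:
  fixes Y :: "'a::topological_space set"
    and J K :: "('a \<times> real) set set"
    and r :: "('a \<times> real) set \<Rightarrow> ('a \<times> real) set"
  assumes Y: "Y homeomorphic cantor_set"
    and J: "subcontinuum (fan_C Y) J"
    and K: "subcontinuum (fan_C Y) K"
    and vK: "fan_top Y \<in> K"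
    and KJ: "K \<subseteq> J"
    and r: "retraction_onto (fan_C Y) J K r"
  shows "simple_retraction (fan_C Y) (fan_top Y) J r \<longleftrightarrow>
         (\<exists>R. retraction_onto (top_of_set (fan_F Y)) (fence Y J) (fence Y K) R \<and>
              (\<forall>x \<in> fence Y J. fan_q Y (R x) = r (fan_q Y x)))"
proof -
  interpret zero_dimensional_fan Y by (rule zero_dimensional_fan_cantor_set[OF Y])
  have Jc: "compactin (fan_C Y) J" and Jconn: "connectedin (fan_C Y) J"
    using J unfolding subcontinuum_def by auto
  show ?thesis
    using simple_retraction_imp_fence_lift[OF Jc Jconn vK KJ r]
      fence_lift_imp_simple_retraction[OF compactin_subset_topspace[OF Jc] vK KJ] by blast
qed

end
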